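(* Let $X$ be a measurable space, $\mathcal{H}$ a Hilbert space and $\gamma:X\to\mathcal{H}$, $x\mapsto\gamma_x$. Assume that $\mathcal{H}_\gamma=\overline{\mathrm{span}}\{\gamma_x\in\mathcal{H}\mid x\in X\}$ is separable. Then the following conditions are equivalent: (1) the map $\gamma$ is weakly measurable, i.e. for every $v\in\mathcal{H}$ the function $A_\gamma v:X\to\mathbb{C}$, $(A_\gamma v)(x)=\langle v,\gamma_x\rangle_{\mathcal{H}}$, is measurable; (2) the map $\gamma$ is measurable from $X$ to $\mathcal{H}$; (3) the function $\Gamma:X\times X\to\mathbb{C}$, $\Gamma(x,t)=\langle\gamma_t,\gamma_x\rangle_{\mathcal{H}}$, is measurable; (4) for all $x\in X$, the function $\Gamma(x,\cdot)$ is measurable from $X$ into $\mathbb{C}$. If $X$ is endowed with a $\sigma$-finite measure $\mu$ and one of the conditions (1)–(4) holds, then $\mathrm{ran}\,A_\gamma\subset\mathcal{M}(X,\mu)$, the operator $A_\gamma$ is continuous from $\mathcal{H}$ into $\mathcal{M}(X,\mu)$, and $$\ker A_\gamma=\mathcal{H}_\mu^\perp,$$ where $\mathcal{S}=\{v\in\mathcal{H}\mid \mu(\gamma^{-1}(B(v,\varepsilon)))>0\ \forall\varepsilon>0\}$ (with $B(v,\varepsilon)=\{w\in\mathcal{H}\mid\|w-v\|_{\mathcal{H}}<\varepsilon\}$) is the essential range of $\gamma$ and $\mathcal{H}_\mu=\overline{\mathrm{span}}\,\mathcal{S}$.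
   Context: $\mathcal{M}(X,\mu)$ denotes the topological vector space of all measurable complex functions on $X$ (identified $\mu$-a.e.) endowed with the topology of convergence in measure on subsets of finite measure. The scalar product $\langle\cdot,\cdot\rangle_{\mathcal{H}}$ is linear in the first argument. *)

theory Defs
  imports "HOL-Analysis.Analysis" "HOL-Probability.Probability"
begin

text \<open>A complex Hilbert space: a real Banach space type 'h together with a complex
  scalar multiplication sc (extending the real one) and a complex inner product ci,
  linear in the first argument, conjugate symmetric, inducing the norm.\<close>
definition complex_hilbert ::
  "(complex \<Rightarrow> 'h::banach \<Rightarrow> 'h) \<Rightarrow> ('h \<Rightarrow> 'h \<Rightarrow> complex) \<Rightarrow> bool" where
  "complex_hilbert sc ci \<longleftrightarrow>
     (\<forall>r x. sc (complex_of_real r) x = scaleR r x) \<and>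
     (\<forall>a x y. sc a (x + y) = sc a x + sc a y) \<and>
     (\<forall>a b x. sc (a + b) x = sc a x + sc b x) \<and>
     (\<forall>a b x. sc (a * b) x = sc a (sc b x)) \<and>
     (\<forall>x y z. ci (x + y) z = ci x z + ci y z) \<and>
     (\<forall>a x y. ci (sc a x) y = a * ci x y) \<and>
     (\<forall>x y. ci y x = cnj (ci x y)) \<and>
     (\<forall>x. ci x x = complex_of_real ((norm x)\<^sup>2))"

definition cspan :: "(complex \<Rightarrow> 'h::real_vector \<Rightarrow> 'h) \<Rightarrow> 'h set \<Rightarrow> 'h set" where
  "cspan sc S = {x. \<exists>F c. finite F \<and> F \<subseteq> S \<and> x = (\<Sum>v\<in>F. sc (c v) v)}"

definition closed_cspan :: "(complex \<Rightarrow> 'h::real_normed_vector \<Rightarrow> 'h) \<Rightarrow> 'h set \<Rightarrow> 'h set" where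
  "closed_cspan sc S = closure (cspan sc S)"

definition orth_compl :: "('h \<Rightarrow> 'h \<Rightarrow> complex) \<Rightarrow> 'h set \<Rightarrow> 'h set" where
  "orth_compl ci S = {w. \<forall>v\<in>S. ci w v = 0}"

definition analysis_op :: "('h \<Rightarrow> 'h \<Rightarrow> complex) \<Rightarrow> ('a \<Rightarrow> 'h) \<Rightarrow> 'h \<Rightarrow> 'a \<Rightarrow> complex" where
  "analysis_op ci \<gamma> v = (\<lambda>x. ci v (\<gamma> x))"

definition ess_range :: "'a measure \<Rightarrow> ('a \<Rightarrow> 'h::metric_space) \<Rightarrow> 'h set" where
  "ess_range M \<gamma> = {v. \<forall>\<epsilon>>0. emeasure M (\<gamma> -` ball v \<epsilon> \<inter> space M) > 0}"

text \<open>Kernel of A_gamma as an operator into M(X,mu): functions identified mu-a.e.\<close>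
definition ker_meas :: "'a measure \<Rightarrow> ('h \<Rightarrow> 'a \<Rightarrow> complex) \<Rightarrow> 'h set" where
  "ker_meas M A = {v. AE x in M. A v x = 0}"

text \<open>Continuity of a map A from a normed space into M(X,mu), endowed with the topology
  of convergence in measure on sets of finite measure: its (sub)basic neighbourhoods of f
  are {g. mu({x in E. |g x - f x| > eps}) < delta} with E of finite measure.\<close>
definition continuous_into_meas :: "'a measure \<Rightarrow> ('h::real_normed_vector \<Rightarrow> 'a \<Rightarrow> complex) \<Rightarrow> bool" where
  "continuous_into_meas M A \<longleftrightarrow>
     (\<forall>v. \<forall>E\<in>sets M. emeasure M E < \<infinity> \<longrightarrow>
        (\<forall>\<epsilon>>0. \<forall>\<delta>>0. \<exists>\<eta>>0. \<forall>w. norm (w - v) < \<eta> \<longrightarrow>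
           emeasure M {x\<in>E. cmod (A w x - A v x) > \<epsilon>} < ennreal \<delta>))"

end

theory Submission
  imports Defs
begin

text \<open>
  Everything rests on the separability of the closed span K of the \<gamma> x, which provides a
  countable set D \<subseteq> span {\<gamma> x} dense in K. For z \<in> K, the norm is the countable supremum
  of |<z, d>| / |d| over d \<in> D \<union> {0}, so measurability of x \<mapsto> <f x, d> for all d in the span
  makes x \<mapsto> |f x - d| measurable; preimages of open sets are then countable unions of
  preimages of small balls around points of D (Pettis). This gives (1) \<Longrightarrow> (2), and also
  (4) \<Longrightarrow> (2), since (4) is weak measurability against each \<gamma> x and hence against their span.
  (2) \<Longrightarrow> (1) is continuity of the inner product, (3) \<Longrightarrow> (4) is measurability of sections, and
  for (2) \<Longrightarrow> (3) polarization writes \<Gamma>(x, t) through the norms of \<gamma> t + \<alpha> \<gamma> x, which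
  are measurable on X \<times> X by the supremum formula.

  For the operator A_\<gamma>: on a set E of finite measure, \<gamma> is bounded by some N outside a set
  of small measure, and there |<w - v, \<gamma> x>| \<le> N |w - v|, which is continuity in measure.
  The complement of the essential range is covered by countably many preimages of null balls
  around points of D, so \<gamma> x lies in the essential range for almost every x; hence
  <v, \<gamma> x> = 0 almost everywhere iff v is orthogonal to the essential range, whose orthogonal
  complement is that of its closed span.
\<close>

lemma countable_dense_subset:
  fixes S :: "'a::metric_space set"
  assumes "separable_space (top_of_set (closure S))"
  obtains D where "countable D" "D \<subseteq> S" "closure S \<subseteq> closure D"
proof -
  obtain C where C: "countable C" "C \<subseteq> closure S" "closure S \<subseteq> closure C"
    using assms unfolding separable_space_def by (auto simp: closure_of_subtopology Int_absorb1)
  have "\<exists>y\<in>S. dist y c < inverse (Suc n)" if "c \<in> C" for c n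
  proof -
    have "c \<in> closure S" "inverse (real (Suc n)) > 0"
      using C(2) that by auto
    then show ?thesis
      using closure_approachable by blast
  qed
  then obtain g where g: "\<And>c n. c \<in> C \<Longrightarrow> g c n \<in> S \<and> dist (g c n) c < inverse (Suc n)"
    by metis
  define D where "D = (\<lambda>(c, n). g c n) ` (C \<times> UNIV)"
  have "C \<subseteq> closure D"
  proof
    fix c assume c: "c \<in> C"
    show "c \<in> closure D"
      unfolding closure_approachable
    proof (intro allI impI)
      fix e :: real assume "e > 0"
      then obtain n where "inverse (Suc n) < e"
        using reals_Archimedean by blast
      moreover have "g c n \<in> D"
        using c unfolding D_def by (auto intro: image_eqI[of _ _ "(c, n)"])
      ultimately show "\<exists>y\<in>D. dist y c < e"
        using g[OF c, of n] by force
    qed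
  qed
  then have "closure S \<subseteq> closure D"
    using C(3) closure_minimal[of C "closure D"] by auto
  moreover have "countable D" "D \<subseteq> S"
    using C(1) g unfolding D_def by auto
  ultimately show ?thesis
    using that by blast
qed

lemma closure_obtain_ball:
  fixes D :: "'a::metric_space set"
  assumes "y \<in> closure D" "e > 0"
  obtains d n where "d \<in> D" "y \<in> ball d (inverse (Suc n))" "ball d (inverse (Suc n)) \<subseteq> ball y e"
proof -
  obtain n where n: "inverse (Suc n) < e / 2"
    using reals_Archimedean \<open>e > 0\<close> by (metis half_gt_zero)
  obtain d where d: "d \<in> D" "dist d y < inverse (Suc n)"
    using assms(1) closure_approachable by (metis inverse_positive_iff_positive of_nat_0_less_iff zero_less_Suc)
  have "ball d (inverse (Suc n)) \<subseteq> ball y e"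
    using d(2) n by (auto simp: subset_iff) metric
  then show ?thesis
    using that d by (simp add: dist_commute)
qed

lemma borel_measurable_dist_dense:
  fixes g :: "'a \<Rightarrow> 'b::metric_space"
  assumes D: "countable D" and g_closure: "\<And>x. x \<in> space M \<Longrightarrow> g x \<in> closure D"
    and dist_meas: "\<And>d. d \<in> D \<Longrightarrow> (\<lambda>x. dist (g x) d) \<in> borel_measurable M"
  shows "g \<in> borel_measurable M"
proof (rule borel_measurableI)
  fix U :: "'b set" assume U: "open U"
  define I where "I = {(d, n). d \<in> D \<and> ball d (inverse (Suc n)) \<subseteq> U}"
  have "g -` U \<inter> space M = (\<Union>(d, n)\<in>I. {x \<in> space M. dist (g x) d < inverse (Suc n)})"
  proof (intro equalityI subsetI)
    fix x assume x: "x \<in> g -` U \<inter> space M"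
    then obtain e where e: "e > 0" "ball (g x) e \<subseteq> U"
      using U open_contains_ball by blast
    obtain d n where "d \<in> D" "g x \<in> ball d (inverse (Suc n))" "ball d (inverse (Suc n)) \<subseteq> ball (g x) e"
      using closure_obtain_ball[OF g_closure e(1)] x by blast
    then show "x \<in> (\<Union>(d, n)\<in>I. {x \<in> space M. dist (g x) d < inverse (Suc n)})"
      using x e(2) unfolding I_def by (auto simp: dist_commute)
  qed (auto simp: I_def dist_commute)
  also have "\<dots> \<in> sets M"
    using D dist_meas unfolding I_def
    by (intro sets.countable_UN'') (auto intro: countable_subset[of _ "D \<times> UNIV"] simp: borel_measurable_iff_less)
  finally show "g -` U \<inter> space M \<in> sets M" .
qed

lemma AE_in_ess_range:
  fixes g :: "'a \<Rightarrow> 'b::metric_space"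
  assumes D: "countable D" and g_closure: "\<And>x. x \<in> space M \<Longrightarrow> g x \<in> closure D"
    and g: "g \<in> borel_measurable M"
  shows "AE x in M. g x \<in> ess_range M g"
proof -
  define B where "B = (\<lambda>(d, n). g -` ball d (inverse (Suc n)) \<inter> space M)"
  define I where "I = {(d, n). d \<in> D \<and> emeasure M (B (d, n)) = 0}"
  have B_sets: "B p \<in> sets M" for p
    using g unfolding B_def by (auto simp: case_prod_beta intro: measurable_sets)
  have "(\<Union>p\<in>I. B p) \<in> null_sets M"
    using D B_sets unfolding I_def
    by (intro null_sets_UN') (auto intro: countable_subset[of _ "D \<times> UNIV"])
  moreover have "{x \<in> space M. g x \<notin> ess_range M g} \<subseteq> (\<Union>p\<in>I. B p)"
  proof
    fix x assume x: "x \<in> {x \<in> space M. g x \<notin> ess_range M g}"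
    then obtain e where e: "e > 0" "emeasure M (g -` ball (g x) e \<inter> space M) = 0"
      unfolding ess_range_def by (auto simp: not_less)
    obtain d n where d: "d \<in> D" "g x \<in> ball d (inverse (Suc n))" "ball d (inverse (Suc n)) \<subseteq> ball (g x) e"
      using closure_obtain_ball[OF g_closure e(1)] x by blast
    have "emeasure M (B (d, n)) \<le> emeasure M (g -` ball (g x) e \<inter> space M)"
      using d(3) g unfolding B_def by (intro emeasure_mono) (auto intro: measurable_sets)
    then have "(d, n) \<in> I"
      using d(1) e(2) unfolding I_def by simp
    moreover have "x \<in> B (d, n)"
      using x d(2) unfolding B_def by simp
    ultimately show "x \<in> (\<Union>p\<in>I. B p)"
      by blast
  qed
  ultimately show ?thesis
    by (rule AE_I')
qed

lemma AE_zero_imp_zero_on_ess_range: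
  fixes h :: "'b::metric_space \<Rightarrow> 'c::real_normed_vector"
  assumes h: "continuous_on UNIV h" and ae: "AE x in M. h (g x) = 0" and s: "s \<in> ess_range M g"
  shows "h s = 0"
proof (rule ccontr)
  assume "h s \<noteq> 0"
  moreover have "open {y. h y \<noteq> 0}"
    using h by (simp add: open_Collect_neq continuous_on_const)
  ultimately obtain e where e: "e > 0" "ball s e \<subseteq> {y. h y \<noteq> 0}"
    using open_contains_ball by blast
  obtain N where N: "{x \<in> space M. h (g x) \<noteq> 0} \<subseteq> N" "N \<in> sets M" "emeasure M N = 0"
    using ae by (auto elim!: AE_E)
  have "emeasure M (g -` ball s e \<inter> space M) \<le> emeasure M N"
    using e(2) N(1,2) by (intro emeasure_mono) auto
  moreover have "emeasure M (g -` ball s e \<inter> space M) > 0"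
    using s e(1) unfolding ess_range_def by blast
  ultimately show False
    using N(3) by simp
qed

lemma tendsto_emeasure_superlevel_0:
  fixes f :: "'a \<Rightarrow> real"
  assumes f: "f \<in> borel_measurable M" and E: "E \<in> sets M" "emeasure M E < \<infinity>"
  shows "(\<lambda>n. emeasure M {x \<in> E. real n < f x}) \<longlonglongrightarrow> 0"
proof -
  define A where "A n = {x \<in> E. real n < f x}" for n :: nat
  have "A n = E \<inter> {x \<in> space M. real n < f x}" for n
    using sets.sets_into_space[OF E(1)] unfolding A_def by auto
  moreover have "E \<inter> {x \<in> space M. real n < f x} \<in> sets M" for n
    using E(1) f by measurable
  ultimately have A_sets: "range A \<subseteq> sets M"
    by auto
  have "decseq A"
    unfolding A_def decseq_def by auto
  moreover have "emeasure M (A n) \<noteq> \<infinity>" for n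
    using E A_sets emeasure_mono[of "A n" E M] unfolding A_def by (auto simp: top_unique)
  moreover have "(\<Inter>n. A n) = {}"
    unfolding A_def using reals_Archimedean2 by (auto intro: less_asym)
  ultimately show ?thesis
    using Lim_emeasure_decseq[OF A_sets] unfolding A_def by simp
qed

locale complex_hilbert_space =
  fixes sc :: "complex \<Rightarrow> 'h::banach \<Rightarrow> 'h" and ci :: "'h \<Rightarrow> 'h \<Rightarrow> complex"
  assumes complex_hilbert: "complex_hilbert sc ci"
begin

lemma sc_of_real: "sc (complex_of_real r) x = r *\<^sub>R x"
  and sc_add_right: "sc a (x + y) = sc a x + sc a y"
  and sc_add_left: "sc (a + b) x = sc a x + sc b x"
  and sc_mult: "sc (a * b) x = sc a (sc b x)"
  and ci_add_left: "ci (x + y) z = ci x z + ci y z"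
  and ci_sc_left: "ci (sc a x) y = a * ci x y"
  and ci_commute: "ci y x = cnj (ci x y)"
  and ci_self: "ci x x = complex_of_real ((norm x)\<^sup>2)"
  using complex_hilbert unfolding complex_hilbert_def by blast+

lemma sc_one: "sc 1 x = x"
  using sc_of_real[of 1] by simp

lemma sc_zero_left: "sc 0 x = 0"
  using sc_of_real[of 0] by simp

lemma ci_add_right: "ci z (x + y) = ci z x + ci z y"
  by (metis ci_add_left ci_commute complex_cnj_add)

lemma ci_sc_right: "ci x (sc a y) = cnj a * ci x y"
  by (metis ci_commute ci_sc_left complex_cnj_mult)

lemma linear_sc: "linear (sc a)"
  by (rule linearI) (simp_all add: sc_add_right flip: sc_of_real sc_mult mult.commute)

lemma linear_ci_left: "linear (\<lambda>x. ci x z)"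
  by (rule linearI) (simp_all add: ci_add_left scaleR_conv_of_real flip: sc_of_real ci_sc_left)

lemma linear_ci_right: "linear (ci z)"
  by (rule linearI) (simp_all add: ci_add_right ci_sc_right scaleR_conv_of_real flip: sc_of_real)

lemmas sc_sum_right = linear_sum[OF linear_sc]
  and ci_zero_left[simp] = linear_0[OF linear_ci_left]
  and ci_diff_left = linear_diff[OF linear_ci_left]
  and ci_zero_right[simp] = linear_0[OF linear_ci_right]
  and ci_sum_right = linear_sum[OF linear_ci_right]

lemma power2_norm_add_sc:
  "(norm (a + sc \<alpha> b))\<^sup>2 = (norm a)\<^sup>2 + (cmod \<alpha>)\<^sup>2 * (norm b)\<^sup>2 + 2 * Re (cnj \<alpha> * ci a b)"
proof -
  have "complex_of_real ((norm (a + sc \<alpha> b))\<^sup>2) = ci (a + sc \<alpha> b) (a + sc \<alpha> b)"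
    by (rule ci_self[symmetric])
  also have "\<dots> = ci a a + cnj \<alpha> * ci a b + cnj (cnj \<alpha> * ci a b) + (\<alpha> * cnj \<alpha>) * ci b b"
    by (simp add: ci_add_left ci_add_right ci_sc_left ci_sc_right ci_commute[of a b] algebra_simps)
  also have "\<dots> = complex_of_real ((norm a)\<^sup>2 + (cmod \<alpha>)\<^sup>2 * (norm b)\<^sup>2 + 2 * Re (cnj \<alpha> * ci a b))"
    by (simp add: complex_eq_iff ci_self cmod_power2 algebra_simps) (simp add: power2_eq_square)
  finally show ?thesis
    by (simp only: of_real_eq_iff)
qed

lemma norm_sc: "norm (sc a x) = cmod a * norm x"
  using power2_norm_add_sc[of 0 a x] by (simp add: power_mult_distrib[symmetric])

lemma norm_ci_le: "cmod (ci x y) \<le> norm x * norm y"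
proof (cases "y = 0")
  case False
  \<comment> \<open>the t minimising |x + t y|\<close>
  define t where "t = - ci x y / complex_of_real ((norm y)\<^sup>2)"
  have norm_t: "cmod t = cmod (ci x y) / (norm y)\<^sup>2"
    by (simp add: t_def norm_divide norm_power)
  have "cnj t * ci x y = - complex_of_real ((cmod (ci x y))\<^sup>2 / (norm y)\<^sup>2)"
    by (simp add: t_def algebra_simps flip: complex_norm_square)
  then have Re_t: "Re (cnj t * ci x y) = - (cmod (ci x y))\<^sup>2 / (norm y)\<^sup>2"
    by simp
  have "0 \<le> (norm (x + sc t y))\<^sup>2"
    by simp
  also have "\<dots> = (norm x)\<^sup>2 + (cmod t)\<^sup>2 * (norm y)\<^sup>2 + 2 * Re (cnj t * ci x y)"
    by (rule power2_norm_add_sc)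
  also have "\<dots> = (norm x)\<^sup>2 - (cmod (ci x y))\<^sup>2 / (norm y)\<^sup>2"
    using False unfolding norm_t Re_t by (simp add: power2_eq_square field_simps)
  finally have "(cmod (ci x y))\<^sup>2 \<le> (norm x * norm y)\<^sup>2"
    using False by (simp add: pos_divide_le_eq power_mult_distrib)
  then show ?thesis
    by (rule power2_le_imp_le) simp
qed simp

lemma bounded_linear_sc: "bounded_linear (sc a)"
  using linear_sc norm_sc
  unfolding bounded_linear_def bounded_linear_axioms_def by (metis mult.commute order_refl)

lemma bounded_linear_ci_right: "bounded_linear (ci z)"
  using linear_ci_right norm_ci_le
  unfolding bounded_linear_def bounded_linear_axioms_def by (metis mult.commute)

lemma cspan_sum_mem:
  "finite F \<Longrightarrow> F \<subseteq> S \<Longrightarrow> (\<Sum>v\<in>F. sc (c v) v) \<in> cspan sc S"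
  unfolding cspan_def by blast

lemma cspan_superset: "S \<subseteq> cspan sc S"
proof
  fix x assume "x \<in> S"
  then show "x \<in> cspan sc S"
    using cspan_sum_mem[of "{x}" S "\<lambda>_. 1"] by (simp add: sc_one)
qed

lemma cspan_sc:
  assumes "x \<in> cspan sc S"
  shows "sc a x \<in> cspan sc S"
proof -
  obtain F c where "finite F" "F \<subseteq> S" "x = (\<Sum>v\<in>F. sc (c v) v)"
    using assms unfolding cspan_def by auto
  then show ?thesis
    using cspan_sum_mem[of F S "\<lambda>v. a * c v"] by (simp add: sc_sum_right sc_mult)
qed

lemma cspan_add:
  assumes "x \<in> cspan sc S" "y \<in> cspan sc S"
  shows "x + y \<in> cspan sc S"
proof -
  obtain F c where F: "finite F" "F \<subseteq> S" "x = (\<Sum>v\<in>F. sc (c v) v)"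
    using assms(1) unfolding cspan_def by auto
  obtain G d where G: "finite G" "G \<subseteq> S" "y = (\<Sum>v\<in>G. sc (d v) v)"
    using assms(2) unfolding cspan_def by auto
  define c' where "c' v = (if v \<in> F then c v else 0)" for v
  define d' where "d' v = (if v \<in> G then d v else 0)" for v
  have "x = (\<Sum>v\<in>F \<union> G. sc (c' v) v)" "y = (\<Sum>v\<in>F \<union> G. sc (d' v) v)"
    unfolding F(3) G(3) c'_def d'_def using F(1) G(1)
    by (auto intro: sum.mono_neutral_cong_left simp: sc_zero_left)
  then have "x + y = (\<Sum>v\<in>F \<union> G. sc (c' v + d' v) v)"
    by (simp add: sum.distrib sc_add_left)
  then show ?thesis
    using F G cspan_sum_mem[of "F \<union> G" S "\<lambda>v. c' v + d' v"] by auto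
qed

lemma closed_cspan_superset: "S \<subseteq> closed_cspan sc S"
  unfolding closed_cspan_def using cspan_superset closure_subset by blast

lemma closed_cspan_add:
  assumes "x \<in> closed_cspan sc S" "y \<in> closed_cspan sc S"
  shows "x + y \<in> closed_cspan sc S"
proof -
  have "x + y \<in> closure (cspan sc S) + closure (cspan sc S)"
    using assms unfolding closed_cspan_def by (rule set_plus_intro)
  also have "\<dots> \<subseteq> closure (cspan sc S + cspan sc S)"
    by (rule closure_sum)
  also have "\<dots> \<subseteq> closure (cspan sc S)"
    by (rule closure_mono) (auto simp: set_plus_def cspan_add)
  finally show ?thesis
    unfolding closed_cspan_def .
qed

lemma closed_cspan_sc:
  assumes "x \<in> closed_cspan sc S"
  shows "sc a x \<in> closed_cspan sc S"
proof -
  have "sc a ` closure (cspan sc S) \<subseteq> closure (cspan sc S)"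
    using linear_continuous_on[OF bounded_linear_sc] cspan_sc closure_subset
    by (intro image_closure_subset) blast+
  then show ?thesis
    using assms unfolding closed_cspan_def by blast
qed

lemma closed_cspan_diff:
  assumes "x \<in> closed_cspan sc S" "y \<in> closed_cspan sc S"
  shows "x - y \<in> closed_cspan sc S"
  using closed_cspan_add[OF assms(1) closed_cspan_sc[OF assms(2), of "-1"]]
  by (simp add: sc_of_real[of "-1", simplified])

lemma orth_compl_closed_cspan: "orth_compl ci (closed_cspan sc S) = orth_compl ci S"
proof
  show "orth_compl ci (closed_cspan sc S) \<subseteq> orth_compl ci S"
    unfolding orth_compl_def using closed_cspan_superset by blast
next
  show "orth_compl ci S \<subseteq> orth_compl ci (closed_cspan sc S)"
  proof
    fix w assume w: "w \<in> orth_compl ci S"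
    have "cspan sc S \<subseteq> {y. ci w y = 0}"
      using w unfolding cspan_def orth_compl_def
      by (fastforce simp: ci_sum_right ci_sc_right intro!: sum.neutral)
    moreover have "closed {y. ci w y = 0}"
      using linear_continuous_on[OF bounded_linear_ci_right]
      by (rule closed_Collect_eq) (rule continuous_on_const)
    ultimately have "closed_cspan sc S \<subseteq> {y. ci w y = 0}"
      unfolding closed_cspan_def by (rule closure_minimal)
    then show "w \<in> orth_compl ci (closed_cspan sc S)"
      unfolding orth_compl_def by blast
  qed
qed

lemma borel_measurable_ci_commute:
  "(\<lambda>x. ci (f x) d) \<in> borel_measurable M \<longleftrightarrow> (\<lambda>x. ci d (f x)) \<in> borel_measurable M"
  by (subst (1 2) borel_measurable_complex_iff) (simp add: ci_commute[of d])

lemma norm_eq_SUP_ci: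
  assumes z: "z \<in> closure D"
  shows "norm z = (SUP d\<in>insert 0 D. cmod (ci z d) / norm d)"
proof (rule antisym)
  have le_norm: "cmod (ci z d) / norm d \<le> norm z" for d
    using norm_ci_le[of z d] by (cases "d = 0") (simp_all add: divide_le_eq)
  then have bdd: "bdd_above ((\<lambda>d. cmod (ci z d) / norm d) ` insert 0 D)"
    by (rule bdd_aboveI2)
  show "(SUP d\<in>insert 0 D. cmod (ci z d) / norm d) \<le> norm z"
    using le_norm by (intro cSUP_least) auto
  show "norm z \<le> (SUP d\<in>insert 0 D. cmod (ci z d) / norm d)"
  proof (rule dense_le)
    fix r assume r: "r < norm z"
    show "r \<le> (SUP d\<in>insert 0 D. cmod (ci z d) / norm d)"
    proof (cases "r < 0")
      case True
      then show ?thesis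
        using cSUP_upper[OF insertI1 bdd] by simp
    next
      case False
      then have "z \<noteq> 0"
        using r by auto
      define \<phi> where "\<phi> y = cmod (ci z y) / norm y" for y
      \<comment> \<open>\<phi> is continuous at z with \<phi> z = norm z, so it exceeds r at points of D near z\<close>
      have "isCont \<phi> z"
        unfolding \<phi>_def using \<open>z \<noteq> 0\<close> linear_continuous_at[OF bounded_linear_ci_right]
        by (auto intro!: continuous_intros)
      moreover have "\<phi> z = norm z"
        unfolding \<phi>_def using \<open>z \<noteq> 0\<close> by (simp add: ci_self power2_eq_square norm_mult)
      ultimately obtain \<delta> where "\<delta> > 0" "\<And>y. dist y z < \<delta> \<Longrightarrow> dist (\<phi> y) (norm z) < norm z - r"
        using r unfolding continuous_at_eps_delta by (metis diff_gt_0_iff_gt)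
      moreover obtain d where "d \<in> D" "dist d z < \<delta>"
        using z \<open>\<delta> > 0\<close> closure_approachable by blast
      ultimately have "d \<in> D" "r < \<phi> d"
        by (auto simp: dist_real_def abs_less_iff)
      then show ?thesis
        using cSUP_upper[OF insertI2 bdd, of d] unfolding \<phi>_def by linarith
    qed
  qed
qed

lemma borel_measurable_norm_dense:
  assumes D: "countable D" and f_closure: "\<And>x. x \<in> space M \<Longrightarrow> f x \<in> closure D"
    and ci_meas: "\<And>d. d \<in> D \<Longrightarrow> (\<lambda>x. ci (f x) d) \<in> borel_measurable M"
  shows "(\<lambda>x. norm (f x)) \<in> borel_measurable M"
proof -
  have "(\<lambda>x. SUP d\<in>insert 0 D. cmod (ci (f x) d) / norm d) \<in> borel_measurable M"
  proof (rule borel_measurable_cSUP)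
    show "(\<lambda>x. cmod (ci (f x) d) / norm d) \<in> borel_measurable M" if "d \<in> insert 0 D" for d
      using that ci_meas by (cases "d = 0") auto
    show "bdd_above ((\<lambda>d. cmod (ci (f x) d) / norm d) ` insert 0 D)" for x
      using norm_ci_le[of "f x"] by (intro bdd_aboveI2[where M = "norm (f x)"]) (simp add: divide_le_eq)
  qed (use D in simp)
  then show ?thesis
    by (rule measurable_cong[THEN iffD2, rotated]) (intro norm_eq_SUP_ci f_closure)
qed

lemma closed_cspan_countable_dense:
  assumes "separable_space (top_of_set (closed_cspan sc S))"
  obtains D where "countable D" "D \<subseteq> cspan sc S" "closed_cspan sc S \<subseteq> closure D"
  using countable_dense_subset assms unfolding closed_cspan_def by blast

lemma borel_measurable_ci_cspan:
  assumes meas: "\<And>s. s \<in> S \<Longrightarrow> (\<lambda>x. ci (f x) s) \<in> borel_measurable M" and d: "d \<in> cspan sc S"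
  shows "(\<lambda>x. ci (f x) d) \<in> borel_measurable M"
proof -
  obtain F c where "finite F" "F \<subseteq> S" "d = (\<Sum>v\<in>F. sc (c v) v)"
    using d unfolding cspan_def by auto
  then show ?thesis
    using meas by (auto simp: ci_sum_right ci_sc_right intro!: borel_measurable_sum borel_measurable_times)
qed

lemma borel_measurable_norm_closed_cspan:
  assumes sep: "separable_space (top_of_set (closed_cspan sc S))"
    and f_cspan: "\<And>x. x \<in> space M \<Longrightarrow> f x \<in> closed_cspan sc S"
    and ci_meas: "\<And>s. s \<in> S \<Longrightarrow> (\<lambda>x. ci (f x) s) \<in> borel_measurable M"
  shows "(\<lambda>x. norm (f x)) \<in> borel_measurable M"
proof -
  obtain D where "countable D" "D \<subseteq> cspan sc S" "closed_cspan sc S \<subseteq> closure D"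
    using sep by (rule closed_cspan_countable_dense)
  then show ?thesis
    using f_cspan borel_measurable_ci_cspan[OF ci_meas] by (intro borel_measurable_norm_dense) auto
qed

lemma borel_measurable_weakly_measurable:
  assumes sep: "separable_space (top_of_set (closed_cspan sc S))"
    and f_cspan: "\<And>x. x \<in> space M \<Longrightarrow> f x \<in> closed_cspan sc S"
    and ci_meas: "\<And>s. s \<in> S \<Longrightarrow> (\<lambda>x. ci (f x) s) \<in> borel_measurable M"
  shows "f \<in> borel_measurable M"
proof -
  obtain D where D: "countable D" "D \<subseteq> cspan sc S" "closed_cspan sc S \<subseteq> closure D"
    using sep by (rule closed_cspan_countable_dense)
  show ?thesis
  proof (rule borel_measurable_dist_dense[OF D(1)])
    show "f x \<in> closure D" if "x \<in> space M" for x
      using f_cspan[OF that] D(3) by blast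
    fix d assume "d \<in> D"
    then have d: "d \<in> closed_cspan sc S"
      using D(2) closure_subset unfolding closed_cspan_def by blast
    have "(\<lambda>x. norm (f x - d)) \<in> borel_measurable M"
    proof (rule borel_measurable_norm_closed_cspan[OF sep])
      show "f x - d \<in> closed_cspan sc S" if "x \<in> space M" for x
        using f_cspan[OF that] d(1) by (rule closed_cspan_diff)
      show "(\<lambda>x. ci (f x - d) s) \<in> borel_measurable M" if "s \<in> S" for s
        using ci_meas[OF that] by (simp add: ci_diff_left)
    qed
    then show "(\<lambda>x. dist (f x) d) \<in> borel_measurable M"
      by (simp add: dist_norm)
  qed
qed

lemma borel_measurable_ci_closed_cspan:
  assumes sep: "separable_space (top_of_set (closed_cspan sc S))"
    and f_cspan: "\<And>x. x \<in> space M \<Longrightarrow> f x \<in> closed_cspan sc S"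
    and g_cspan: "\<And>x. x \<in> space M \<Longrightarrow> g x \<in> closed_cspan sc S"
    and f_meas: "\<And>s. s \<in> S \<Longrightarrow> (\<lambda>x. ci (f x) s) \<in> borel_measurable M"
    and g_meas: "\<And>s. s \<in> S \<Longrightarrow> (\<lambda>x. ci (g x) s) \<in> borel_measurable M"
  shows "(\<lambda>x. ci (f x) (g x)) \<in> borel_measurable M"
proof -
  have norm_f[measurable]: "(\<lambda>x. norm (f x)) \<in> borel_measurable M"
    using sep f_cspan f_meas by (rule borel_measurable_norm_closed_cspan)
  have norm_g[measurable]: "(\<lambda>x. norm (g x)) \<in> borel_measurable M"
    using sep g_cspan g_meas by (rule borel_measurable_norm_closed_cspan)
  have norm_f_g[measurable]: "(\<lambda>x. norm (f x + sc \<alpha> (g x))) \<in> borel_measurable M" for \<alpha>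
    using sep
  proof (rule borel_measurable_norm_closed_cspan)
    show "f x + sc \<alpha> (g x) \<in> closed_cspan sc S" if "x \<in> space M" for x
      using f_cspan[OF that] g_cspan[OF that] by (intro closed_cspan_add closed_cspan_sc)
    show "(\<lambda>x. ci (f x + sc \<alpha> (g x)) s) \<in> borel_measurable M" if "s \<in> S" for s
      using f_meas[OF that] g_meas[OF that] by (simp add: ci_add_left ci_sc_left)
  qed
  \<comment> \<open>polarization: \<alpha> = 1 recovers the real part, \<alpha> = \<i> the imaginary part\<close>
  have Re_eq: "(\<lambda>x. Re (ci (f x) (g x)))
      = (\<lambda>x. ((norm (f x + sc 1 (g x)))\<^sup>2 - (norm (f x))\<^sup>2 - (norm (g x))\<^sup>2) / 2)"
    and Im_eq: "(\<lambda>x. Im (ci (f x) (g x)))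
      = (\<lambda>x. ((norm (f x + sc \<i> (g x)))\<^sup>2 - (norm (f x))\<^sup>2 - (norm (g x))\<^sup>2) / 2)"
    by (simp_all add: power2_norm_add_sc)
  show ?thesis
    unfolding borel_measurable_complex_iff Re_eq Im_eq by measurable
qed

lemma borel_measurable_ci_pair_measure:
  assumes sep: "separable_space (top_of_set (closed_cspan sc (\<gamma> ` space M)))"
    and meas: "\<And>d. (\<lambda>x. ci (\<gamma> x) d) \<in> borel_measurable M"
  shows "(\<lambda>(x, t). ci (\<gamma> t) (\<gamma> x)) \<in> borel_measurable (M \<Otimes>\<^sub>M M)"
proof -
  have "(\<lambda>p. ci (\<gamma> (snd p)) (\<gamma> (fst p))) \<in> borel_measurable (M \<Otimes>\<^sub>M M)"
  proof (rule borel_measurable_ci_closed_cspan[OF sep])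
    show "\<gamma> (snd p) \<in> closed_cspan sc (\<gamma> ` space M)" "\<gamma> (fst p) \<in> closed_cspan sc (\<gamma> ` space M)"
      if "p \<in> space (M \<Otimes>\<^sub>M M)" for p
      using that closed_cspan_superset[of "\<gamma> ` space M"] by (auto simp: space_pair_measure)
    show "(\<lambda>p. ci (\<gamma> (snd p)) s) \<in> borel_measurable (M \<Otimes>\<^sub>M M)"
      "(\<lambda>p. ci (\<gamma> (fst p)) s) \<in> borel_measurable (M \<Otimes>\<^sub>M M)" for s
      by (rule measurable_compose[OF measurable_snd meas] measurable_compose[OF measurable_fst meas])+
  qed
  then show ?thesis
    by (simp add: split_beta)
qed

lemma continuous_into_meas_analysis_op:
  assumes \<gamma>: "\<gamma> \<in> borel_measurable M"
  shows "continuous_into_meas M (analysis_op ci \<gamma>)"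
  unfolding continuous_into_meas_def
proof (intro allI ballI impI)
  fix v E and \<epsilon> \<delta> :: real
  assume E: "E \<in> sets M" "emeasure M E < \<infinity>" and "\<epsilon> > 0" "\<delta> > 0"
  have "(\<lambda>n. emeasure M {x \<in> E. real n < norm (\<gamma> x)}) \<longlonglongrightarrow> 0"
    using \<gamma> E by (intro tendsto_emeasure_superlevel_0) auto
  then have "\<forall>\<^sub>F n in sequentially. emeasure M {x \<in> E. real n < norm (\<gamma> x)} < ennreal \<delta>"
    using \<open>\<delta> > 0\<close> by (intro order_tendstoD(2)) auto
  then obtain N :: nat where N: "emeasure M {x \<in> E. real N < norm (\<gamma> x)} < ennreal \<delta>"
    by (meson eventually_sequentially order_refl)
  define \<eta> where "\<eta> = \<epsilon> / (real N + 1)"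
  have "\<eta> > 0" "\<eta> * real N < \<epsilon>"
    using \<open>\<epsilon> > 0\<close> unfolding \<eta>_def by (simp_all add: field_simps)
  show "\<exists>\<eta>>0. \<forall>w. norm (w - v) < \<eta> \<longrightarrow>
      emeasure M {x \<in> E. \<epsilon> < cmod (analysis_op ci \<gamma> w x - analysis_op ci \<gamma> v x)} < ennreal \<delta>"
  proof (intro exI[of _ \<eta>] conjI allI impI)
    fix w assume w: "norm (w - v) < \<eta>"
    have "{x \<in> E. \<epsilon> < cmod (analysis_op ci \<gamma> w x - analysis_op ci \<gamma> v x)} \<subseteq> {x \<in> E. real N < norm (\<gamma> x)}"
    proof safe
      fix x assume "x \<in> E" "\<epsilon> < cmod (analysis_op ci \<gamma> w x - analysis_op ci \<gamma> v x)"
      then have "\<epsilon> < cmod (ci (w - v) (\<gamma> x))"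
        by (simp add: analysis_op_def ci_diff_left)
      also have "\<dots> \<le> norm (w - v) * norm (\<gamma> x)"
        by (rule norm_ci_le)
      finally have "\<epsilon> < norm (w - v) * norm (\<gamma> x)" .
      show "real N < norm (\<gamma> x)"
      proof (rule ccontr)
        assume "\<not> real N < norm (\<gamma> x)"
        then have "norm (w - v) * norm (\<gamma> x) \<le> \<eta> * real N"
          using w \<open>\<eta> > 0\<close> by (intro mult_mono) auto
        then show False
          using \<open>\<epsilon> < norm (w - v) * norm (\<gamma> x)\<close> \<open>\<eta> * real N < \<epsilon>\<close> by linarith
      qed
    qed
    moreover have "{x \<in> E. real N < norm (\<gamma> x)} \<in> sets M"
      using E(1) \<gamma> by measurable
    ultimately show "emeasure M {x \<in> E. \<epsilon> < cmod (analysis_op ci \<gamma> w x - analysis_op ci \<gamma> v x)} < ennreal \<delta>"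
      using N by (meson emeasure_mono le_less_trans)
  qed (fact \<open>\<eta> > 0\<close>)
qed

lemma ker_meas_analysis_op:
  assumes \<gamma>: "\<gamma> \<in> borel_measurable M"
    and D: "countable D" "\<And>x. x \<in> space M \<Longrightarrow> \<gamma> x \<in> closure D"
  shows "ker_meas M (analysis_op ci \<gamma>) = orth_compl ci (ess_range M \<gamma>)"
proof (intro equalityI subsetI)
  fix v assume "v \<in> ker_meas M (analysis_op ci \<gamma>)"
  then have "AE x in M. ci v (\<gamma> x) = 0"
    unfolding ker_meas_def analysis_op_def by simp
  then show "v \<in> orth_compl ci (ess_range M \<gamma>)"
    using AE_zero_imp_zero_on_ess_range[OF linear_continuous_on[OF bounded_linear_ci_right]]
    unfolding orth_compl_def by blast
next
  fix v assume "v \<in> orth_compl ci (ess_range M \<gamma>)"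
  then have "AE x in M. ci v (\<gamma> x) = 0"
    using AE_in_ess_range[OF D \<gamma>] unfolding orth_compl_def by (auto elim: eventually_mono)
  then show "v \<in> ker_meas M (analysis_op ci \<gamma>)"
    unfolding ker_meas_def analysis_op_def by simp
qed

end

theorem proposition2:
  fixes M :: "'a measure"
    and sc :: "complex \<Rightarrow> 'h::banach \<Rightarrow> 'h"
    and ci :: "'h \<Rightarrow> 'h \<Rightarrow> complex"
    and \<gamma> :: "'a \<Rightarrow> 'h"
  assumes hilb: "complex_hilbert sc ci"
    and sep: "separable_space (top_of_set (closed_cspan sc (\<gamma> ` space M)))"
  defines "c1 \<equiv> (\<forall>v. analysis_op ci \<gamma> v \<in> borel_measurable M)"
    and "c2 \<equiv> \<gamma> \<in> borel_measurable M"
    and "c3 \<equiv> (\<lambda>(x, t). ci (\<gamma> t) (\<gamma> x)) \<in> borel_measurable (M \<Otimes>\<^sub>M M)"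
    and "c4 \<equiv> (\<forall>x\<in>space M. (\<lambda>t. ci (\<gamma> t) (\<gamma> x)) \<in> borel_measurable M)"
  shows "(c1 \<longleftrightarrow> c2) \<and> (c2 \<longleftrightarrow> c3) \<and> (c3 \<longleftrightarrow> c4) \<and>
    (sigma_finite_measure M \<and> (c1 \<or> c2 \<or> c3 \<or> c4) \<longrightarrow>
      (\<forall>v. analysis_op ci \<gamma> v \<in> borel_measurable M) \<and>
      continuous_into_meas M (analysis_op ci \<gamma>) \<and>
      ker_meas M (analysis_op ci \<gamma>) = orth_compl ci (closed_cspan sc (ess_range M \<gamma>)))"
proof -
  interpret complex_hilbert_space sc ci
    using hilb by unfold_locales
  have \<gamma>_cspan: "\<gamma> x \<in> closed_cspan sc (\<gamma> ` space M)" if "x \<in> space M" for x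
    using closed_cspan_superset[of "\<gamma> ` space M"] that by blast
  have c1_iff: "c1 \<longleftrightarrow> (\<forall>d. (\<lambda>x. ci (\<gamma> x) d) \<in> borel_measurable M)"
    unfolding c1_def analysis_op_def by (simp add: borel_measurable_ci_commute)
  have c1_c2: "c1 \<Longrightarrow> c2"
    unfolding c1_iff c2_def by (intro borel_measurable_weakly_measurable[OF sep \<gamma>_cspan]) auto
  have c2_c1: "c2 \<Longrightarrow> c1"
    unfolding c1_def c2_def analysis_op_def
    using borel_measurable_continuous_on[OF linear_continuous_on[OF bounded_linear_ci_right]] by blast
  have c2_c3: "c2 \<Longrightarrow> c3"
    using c2_c1 unfolding c1_iff c3_def by (blast intro: borel_measurable_ci_pair_measure[OF sep])
  have c3_c4: "c3 \<Longrightarrow> c4"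
    unfolding c3_def c4_def using measurable_Pair2 by fastforce
  have c4_c2: "c4 \<Longrightarrow> c2"
    unfolding c4_def c2_def by (intro borel_measurable_weakly_measurable[OF sep \<gamma>_cspan]) auto
  \<comment> \<open>the second part holds without \<sigma>-finiteness\<close>
  moreover have "continuous_into_meas M (analysis_op ci \<gamma>) \<and>
      ker_meas M (analysis_op ci \<gamma>) = orth_compl ci (closed_cspan sc (ess_range M \<gamma>))" if c2
  proof -
    obtain D where D: "countable D" "closed_cspan sc (\<gamma> ` space M) \<subseteq> closure D"
      using sep by (rule closed_cspan_countable_dense)
    have "ker_meas M (analysis_op ci \<gamma>) = orth_compl ci (ess_range M \<gamma>)"
      using \<open>c2\<close> D \<gamma>_cspan unfolding c2_def by (intro ker_meas_analysis_op) auto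
    then show ?thesis
      using \<open>c2\<close> unfolding c2_def by (simp add: orth_compl_closed_cspan continuous_into_meas_analysis_op)
  qed
  ultimately show ?thesis
    using c1_c2 c2_c1 c2_c3 c3_c4 unfolding c1_def by blast
qed

end
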